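(* Let $(\mathbf r(t),\mathbf v(t))\in\Omega$, $t\ge0$, be a stationary solution of the three-dimensional equations of motion, and let $\mathbf L$ be its (constant) angular momentum. If there is at least one time $t_0\ge0$ at which the minimum possible root-mean-square size of the system is achieved, i.e. $g(\mathbf r(t_0))=W(\mathbf L,T(\mathbf v(t_0)))$, then this trajectory is flat (all particles move in one fixed plane).
   Context: Fix $N\ge2$, masses $m_i>0$, $\gamma>0$. $\mathfrak R_3=\{\mathbf r=(\mathbf r_1,\dots,\mathbf r_N)\in(\mathbb R^3)^N:\mathbf r_i\ne\mathbf r_j,\ i\ne j\}$, phase space $\Omega=\mathfrak R_3\times(\mathbb R^3)^N$. Equations of motion: $\dot{\mathbf r}_i=\mathbf v_i$, $m_i\dot{\mathbf v}_i=\sum_{j\ne i}\gamma m_im_j(\mathbf r_j-\mathbf r_i)/|\mathbf r_j-\mathbf r_i|^3$. A solution is stationary if there are $0<C_1\le C_2<\infty$ with $C_1\le|\mathbf r_j(t)-\mathbf r_i(t)|\le C_2$ for all $i\ne j$, $t\ge0$. $\mathbf L(\mathbf r,\mathbf v)=\sum_im_i\mathbf r_i\times\mathbf v_i$, $T(\mathbf v)=\frac12\sum_im_i|\mathbf v_i|^2$, $g(\mathbf r)=\sum_im_i|\mathbf r_i|^2$ (so the root-mean-square size is $b=\sqrt{g/\sum_jm_j}$). For $\mathbf L\in\mathbb R^3$, $T\ge0$: $W(\mathbf L,T)=\inf\{g(\mathbf r):(\mathbf r,\mathbf v)\in\Omega,\ \mathbf L(\mathbf r,\mathbf v)=\mathbf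 L,\ T(\mathbf v)=T\}$. Since the total energy $T-f$ (with $f(\mathbf r)=\sum_{i<j}\gamma m_im_j/|\mathbf r_j-\mathbf r_i|$) is conserved, $T(\mathbf v(t))$ is determined by the current cohesion $f(\mathbf r(t))$. *)

theory Defs
  imports "HOL-Analysis.Analysis" "HOL-Analysis.Cross3"
begin

text \<open>Configurations of N particles in R^3: functions nat => real^3, only indices i < N matter.\<close>

definition in_R3 :: "nat \<Rightarrow> (nat \<Rightarrow> real^3) \<Rightarrow> bool" where
  "in_R3 N r \<longleftrightarrow> (\<forall>i<N. \<forall>j<N. i \<noteq> j \<longrightarrow> r i \<noteq> r j)"

definition ang_mom :: "nat \<Rightarrow> (nat \<Rightarrow> real) \<Rightarrow> (nat \<Rightarrow> real^3) \<Rightarrow> (nat \<Rightarrow> real^3) \<Rightarrow> real^3" where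
  "ang_mom N m r v = (\<Sum>i<N. m i *\<^sub>R cross3 (r i) (v i))"

definition kin :: "nat \<Rightarrow> (nat \<Rightarrow> real) \<Rightarrow> (nat \<Rightarrow> real^3) \<Rightarrow> real" where
  "kin N m v = (1/2) * (\<Sum>i<N. m i * (norm (v i))\<^sup>2)"

definition gmom :: "nat \<Rightarrow> (nat \<Rightarrow> real) \<Rightarrow> (nat \<Rightarrow> real^3) \<Rightarrow> real" where
  "gmom N m r = (\<Sum>i<N. m i * (norm (r i))\<^sup>2)"

definition Wfun :: "nat \<Rightarrow> (nat \<Rightarrow> real) \<Rightarrow> real^3 \<Rightarrow> real \<Rightarrow> real" where
  "Wfun N m L T = Inf {gmom N m r | r v. in_R3 N r \<and> ang_mom N m r v = L \<and> kin N m v = T}"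

definition accel :: "nat \<Rightarrow> (nat \<Rightarrow> real) \<Rightarrow> real \<Rightarrow> (nat \<Rightarrow> real^3) \<Rightarrow> nat \<Rightarrow> real^3" where
  "accel N m \<gamma> r i = (\<Sum>j\<in>{..<N} - {i}. (\<gamma> * m j / (norm (r j - r i))^3) *\<^sub>R (r j - r i))"

text \<open>(r,v) is a solution on t >= 0 of the equations of motion, staying in Omega.
  (m_i dv_i/dt = sum gamma m_i m_j ..., divided by m_i > 0.)\<close>
definition is_solution :: "nat \<Rightarrow> (nat \<Rightarrow> real) \<Rightarrow> real \<Rightarrow> (real \<Rightarrow> nat \<Rightarrow> real^3) \<Rightarrow> (real \<Rightarrow> nat \<Rightarrow> real^3) \<Rightarrow> bool" where
  "is_solution N m \<gamma> r v \<longleftrightarrow>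
     (\<forall>t\<ge>0. in_R3 N (r t) \<and>
        (\<forall>i<N. ((\<lambda>s. r s i) has_vector_derivative v t i) (at t within {0..}) \<and>
               ((\<lambda>s. v s i) has_vector_derivative accel N m \<gamma> (r t) i) (at t within {0..})))"

definition stationary :: "nat \<Rightarrow> (real \<Rightarrow> nat \<Rightarrow> real^3) \<Rightarrow> bool" where
  "stationary N r \<longleftrightarrow> (\<exists>C1 C2. 0 < C1 \<and> C1 \<le> C2 \<and>
     (\<forall>t\<ge>0. \<forall>i<N. \<forall>j<N. i \<noteq> j \<longrightarrow> C1 \<le> norm (r t j - r t i) \<and> norm (r t j - r t i) \<le> C2))"

definition flat :: "nat \<Rightarrow> (real \<Rightarrow> nat \<Rightarrow> real^3) \<Rightarrow> bool" where
  "flat N r \<longleftrightarrow> (\<exists>n::real^3. \<exists>c. n \<noteq> 0 \<and> (\<forall>t\<ge>0. \<forall>i<N. n \<bullet> r t i = c))"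

end

theory Submission
  imports Defs
begin

text \<open>For a unit vector \<open>n\<close>, Cauchy-Schwarz applied to the components of the positions and
  velocities orthogonal to \<open>n\<close> gives
  \<open>(n \<bullet> L)\<^sup>2 \<le> (g - \<Sum> m\<^sub>i (n \<bullet> r\<^sub>i)\<^sup>2) (2T - \<Sum> m\<^sub>i (n \<bullet> v\<^sub>i)\<^sup>2)\<close>.
  For \<open>n = L / |L|\<close> this says \<open>|L|\<^sup>2 \<le> 2 g T\<close>, with equality only if all \<open>r\<^sub>i\<close> and \<open>v\<^sub>i\<close>
  are orthogonal to \<open>L\<close>. A collinear configuration rotating rigidly about \<open>L\<close> has
  \<open>g = |L|\<^sup>2 / (2T)\<close>, so \<open>W(L, T) \<le> |L|\<^sup>2 / (2T)\<close>; and \<open>L = 0\<close> is impossible, since then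
  shrinking the configuration lowers \<open>g\<close> below the infimum. Hence at time \<open>t\<^sub>0\<close> the
  whole state lies in the plane \<open>L\<^sup>\<bottom>\<close> (angular momentum being conserved, \<open>L\<close> is the same at
  \<open>0\<close> and \<open>t\<^sub>0\<close>). Finally, stationarity keeps the particles apart, which makes the normal
  forces Lipschitz in the normal coordinates; a Gronwall argument on the energy of the normal
  motion then shows that the motion stays in that plane for all \<open>t \<ge> 0\<close>.\<close>

section \<open>Conservation of angular momentum\<close>

lemma sum_antisym_eq_0:
  fixes f :: "'i \<Rightarrow> 'i \<Rightarrow> 'a::real_vector"
  assumes "\<And>i j. f j i = - f i j"
  shows "(\<Sum>i\<in>A. \<Sum>j\<in>A. f i j) = 0"
proof -
  let ?S = "\<Sum>i\<in>A. \<Sum>j\<in>A. f i j"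
  have "?S = (\<Sum>j\<in>A. \<Sum>i\<in>A. f i j)"
    by (rule sum.swap)
  also have "\<dots> = (\<Sum>j\<in>A. \<Sum>i\<in>A. - f j i)"
    by (intro sum.cong refl assms)
  also have "\<dots> = - ?S"
    by (simp add: sum_negf)
  finally have "(2::real) *\<^sub>R ?S = 0"
    by (metis add.right_inverse scaleR_2)
  then show ?thesis
    by simp
qed

text \<open>The pair forces obey Newton's third law and act along \<open>r j - r i\<close>, so the torques
  \<open>r i \<times> F\<^sub>i\<^sub>j\<close> form an antisymmetric family.\<close>
lemma total_torque_eq_0:
  "(\<Sum>i<N. m i *\<^sub>R cross3 (r i) (accel N m \<gamma> r i)) = 0"
proof -
  define F where "F i j = (m i * (\<gamma> * m j) / norm (r j - r i) ^ 3) *\<^sub>R cross3 (r i) (r j)" for i j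
  have lin: "linear (cross3 x)" for x
    using bilinear_cross unfolding bilinear_def by auto
  have "m i *\<^sub>R cross3 (r i) (accel N m \<gamma> r i) = (\<Sum>j<N. F i j)" for i
  proof -
    have "m i *\<^sub>R cross3 (r i) (accel N m \<gamma> r i) = (\<Sum>j\<in>{..<N}-{i}. F i j)"
      unfolding accel_def
      by (simp add: linear_sum[OF lin] scaleR_sum_right F_def cross_mult_right Cross3.right_diff_distrib)
    also have "\<dots> = (\<Sum>j<N. F i j)"
      by (rule sum.mono_neutral_left) (auto simp: F_def)
    finally show ?thesis .
  qed
  then have "(\<Sum>i<N. m i *\<^sub>R cross3 (r i) (accel N m \<gamma> r i)) = (\<Sum>i<N. \<Sum>j<N. F i j)"
    by simp
  also have "\<dots> = 0"
  proof (rule sum_antisym_eq_0)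
    fix i j
    show "F j i = - F i j"
      unfolding F_def cross_skew[of "r j"] norm_minus_commute[of "r i"] by (simp add: mult_ac)
  qed
  finally show ?thesis .
qed

lemma ang_mom_conserved:
  assumes sol: "is_solution N m \<gamma> r v" and t: "t \<ge> 0"
  shows "ang_mom N m (r t) (v t) = ang_mom N m (r 0) (v 0)"
proof -
  have bb: "bounded_bilinear cross3"
    using bilinear_conv_bounded_bilinear bilinear_cross by blast
  have "((\<lambda>s. ang_mom N m (r s) (v s)) has_vector_derivative 0) (at s within {0..})"
    if "s \<in> {0..}" for s
  proof -
    have "((\<lambda>s. ang_mom N m (r s) (v s)) has_vector_derivative
       (\<Sum>i<N. m i *\<^sub>R (cross3 (r s i) (accel N m \<gamma> (r s) i) + cross3 (v s i) (v s i))))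
       (at s within {0..})"
      unfolding ang_mom_def
      using sol that unfolding is_solution_def
      by (intro has_vector_derivative_sum bounded_linear.has_vector_derivative[OF bounded_linear_scaleR_right]
          bounded_bilinear.has_vector_derivative[OF bb]) auto
    then show ?thesis
      using total_torque_eq_0[where r="r s"] by (simp add: scaleR_add_right sum.distrib)
  qed
  then show ?thesis
    using t by (intro has_derivative_zero_unique[OF convex_real_interval(1), where x=t and y=0])
      (auto simp: has_vector_derivative_def)
qed

section \<open>The angular momentum inequality\<close>

lemma sum_weighted_sq_eq_0_iff:
  fixes f :: "nat \<Rightarrow> real"
  assumes "\<forall>i<N. m i > 0"
  shows "(\<Sum>i<N. m i * (f i)\<^sup>2) = 0 \<longleftrightarrow> (\<forall>i<N. f i = 0)"
proof -
  have "(\<Sum>i<N. m i * (f i)\<^sup>2) = 0 \<longleftrightarrow> (\<forall>i\<in>{..<N}. m i * (f i)\<^sup>2 = 0)"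
    using assms by (intro sum_nonneg_eq_0_iff) (auto simp: less_imp_le)
  also have "\<dots> \<longleftrightarrow> (\<forall>i<N. f i = 0)"
    using assms by (metis lessThan_iff less_numeral_extra(3) mult_eq_0_iff zero_eq_power2)
  finally show ?thesis .
qed

lemma gmom_nonneg: "\<forall>i<N. m i \<ge> 0 \<Longrightarrow> gmom N m r \<ge> 0"
  unfolding gmom_def by (intro sum_nonneg) auto

lemma kin_nonneg: "\<forall>i<N. m i \<ge> 0 \<Longrightarrow> kin N m v \<ge> 0"
  unfolding kin_def by (intro sum_nonneg mult_nonneg_nonneg) auto

lemma gmom_pos:
  assumes "\<forall>i<N. m i > 0" and "k < N" and "r k \<noteq> 0"
  shows "gmom N m r > 0"
proof -
  have "\<not> (\<forall>i<N. norm (r i) = 0)"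
    using assms(2,3) by auto
  then have "gmom N m r \<noteq> 0"
    unfolding gmom_def sum_weighted_sq_eq_0_iff[OF assms(1)] .
  moreover have "gmom N m r \<ge> 0"
    using assms(1) by (simp add: gmom_nonneg less_imp_le)
  ultimately show ?thesis
    by simp
qed

lemma gmom_pos_of_in_R3:
  assumes "\<forall>i<N. m i > 0" and "N \<ge> 2" and "in_R3 N r"
  shows "gmom N m r > 0"
proof -
  have "0 < N" "1 < N"
    using assms(2) by linarith+
  then have "r 0 \<noteq> r 1"
    using assms(3) unfolding in_R3_def by (meson zero_neq_one)
  then have "r 0 \<noteq> 0 \<or> r 1 \<noteq> 0"
    by metis
  then show ?thesis
    using gmom_pos[OF assms(1) \<open>0 < N\<close>, where r=r] gmom_pos[OF assms(1) \<open>1 < N\<close>, where r=r] by blast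
qed

lemma kin_pos_of_ang_mom_ne_0:
  assumes "\<forall>i<N. m i > 0" and "ang_mom N m r v \<noteq> 0"
  shows "kin N m v > 0"
proof -
  have "\<not> (\<forall>i<N. v i = 0)"
  proof
    assume "\<forall>i<N. v i = 0"
    then have "ang_mom N m r v = 0"
      by (simp add: ang_mom_def)
    with assms(2) show False ..
  qed
  then have "kin N m v \<noteq> 0"
    using sum_weighted_sq_eq_0_iff[OF assms(1), of "\<lambda>i. norm (v i)"] by (simp add: kin_def)
  then show ?thesis
    using kin_nonneg[of N m v] assms(1) by (simp add: less_imp_le)
qed

lemma abs_inner_cross_le_perp:
  fixes n x y :: "real^3"
  assumes n1: "norm n = 1"
  shows "\<bar>n \<bullet> cross3 x y\<bar> \<le> norm (x - (n \<bullet> x) *\<^sub>R n) * norm (y - (n \<bullet> y) *\<^sub>R n)"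
proof -
  define p where "p = x - (n \<bullet> x) *\<^sub>R n"
  define q where "q = y - (n \<bullet> y) *\<^sub>R n"
  have "n \<bullet> cross3 x y = n \<bullet> cross3 p q"
    unfolding p_def q_def
    by (simp add: cross_mult_left cross_mult_right Cross3.left_diff_distrib Cross3.right_diff_distrib
        inner_diff_right dot_cross_self)
  moreover have "\<bar>n \<bullet> cross3 p q\<bar> \<le> norm (cross3 p q)"
    using Cauchy_Schwarz_ineq2[of n "cross3 p q"] n1 by simp
  moreover have "norm (cross3 p q) \<le> norm p * norm q"
  proof (rule power2_le_imp_le)
    show "(norm (cross3 p q))\<^sup>2 \<le> (norm p * norm q)\<^sup>2"
      using norm_cross_dot[of p q] by (metis le_add_same_cancel1 zero_le_power2)
  qed simp
  ultimately show ?thesis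
    unfolding p_def q_def by simp
qed

lemma norm_perp_sq:
  fixes n x :: "'a::real_inner"
  assumes "norm n = 1"
  shows "(norm (x - (n \<bullet> x) *\<^sub>R n))\<^sup>2 = (norm x)\<^sup>2 - (n \<bullet> x)\<^sup>2"
  using assms unfolding power2_norm_eq_inner norm_eq_1
  by (simp add: inner_diff_left inner_diff_right inner_commute[of x n] power2_eq_square algebra_simps)

lemma inner_sq_le_norm_sq:
  fixes n x :: "'a::real_inner"
  assumes "norm n = 1"
  shows "(n \<bullet> x)\<^sup>2 \<le> (norm x)\<^sup>2"
  using assms norm_perp_sq[OF assms, of x] by (metis diff_ge_0_iff_ge zero_le_power2)

lemma sum_mass_norm_perp_sq:
  fixes n :: "'a::real_inner"
  assumes n1: "norm n = 1" and mnn: "\<forall>i<N. m i \<ge> 0"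
  shows "(\<Sum>i<N. (sqrt (m i) * norm (x i - (n \<bullet> x i) *\<^sub>R n))\<^sup>2) =
    (\<Sum>i<N. m i * (norm (x i))\<^sup>2) - (\<Sum>i<N. m i * (n \<bullet> x i)\<^sup>2)"
proof -
  have "(\<Sum>i<N. (sqrt (m i) * norm (x i - (n \<bullet> x i) *\<^sub>R n))\<^sup>2) =
      (\<Sum>i<N. m i * (norm (x i))\<^sup>2 - m i * (n \<bullet> x i)\<^sup>2)"
    using mnn by (intro sum.cong) (auto simp: power_mult_distrib norm_perp_sq[OF n1] right_diff_distrib)
  then show ?thesis
    by (simp add: sum_subtractf)
qed

lemma inner_ang_mom_sq_le:
  assumes n1: "norm n = 1" and mnn: "\<forall>i<N. m i \<ge> 0"
  shows "(n \<bullet> ang_mom N m r v)\<^sup>2 \<le> (gmom N m r - (\<Sum>i<N. m i * (n \<bullet> r i)\<^sup>2)) *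
           (2 * kin N m v - (\<Sum>i<N. m i * (n \<bullet> v i)\<^sup>2))"
proof -
  define P where "P i = sqrt (m i) * norm (r i - (n \<bullet> r i) *\<^sub>R n)" for i
  define Q where "Q i = sqrt (m i) * norm (v i - (n \<bullet> v i) *\<^sub>R n)" for i
  have "\<bar>n \<bullet> ang_mom N m r v\<bar> \<le> (\<Sum>i<N. \<bar>m i * (n \<bullet> cross3 (r i) (v i))\<bar>)"
    unfolding ang_mom_def inner_sum_right inner_scaleR_right by (rule sum_abs)
  also have "\<dots> \<le> (\<Sum>i<N. P i * Q i)"
  proof (rule sum_mono)
    fix i assume "i \<in> {..<N}"
    then have mi: "m i \<ge> 0" using mnn by auto
    have "\<bar>m i * (n \<bullet> cross3 (r i) (v i))\<bar> = m i * \<bar>n \<bullet> cross3 (r i) (v i)\<bar>"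
      using mi by (simp add: abs_mult)
    also have "\<dots> \<le> m i * (norm (r i - (n \<bullet> r i) *\<^sub>R n) * norm (v i - (n \<bullet> v i) *\<^sub>R n))"
      by (rule mult_left_mono[OF abs_inner_cross_le_perp[OF n1] mi])
    also have "\<dots> = (sqrt (m i) * sqrt (m i)) * (norm (r i - (n \<bullet> r i) *\<^sub>R n) * norm (v i - (n \<bullet> v i) *\<^sub>R n))"
      using mi by simp
    also have "\<dots> = P i * Q i"
      by (simp only: P_def Q_def ac_simps)
    finally show "\<bar>m i * (n \<bullet> cross3 (r i) (v i))\<bar> \<le> P i * Q i" .
  qed
  finally have "(n \<bullet> ang_mom N m r v)\<^sup>2 \<le> (\<Sum>i<N. P i * Q i)\<^sup>2"
    by (metis abs_ge_zero power2_abs power_mono)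
  also have "\<dots> \<le> (\<Sum>i<N. (P i)\<^sup>2) * (\<Sum>i<N. (Q i)\<^sup>2)"
    by (rule Cauchy_Schwarz_ineq_sum)
  finally have "(n \<bullet> ang_mom N m r v)\<^sup>2 \<le> (\<Sum>i<N. (P i)\<^sup>2) * (\<Sum>i<N. (Q i)\<^sup>2)" .
  moreover have "(\<Sum>i<N. (P i)\<^sup>2) = gmom N m r - (\<Sum>i<N. m i * (n \<bullet> r i)\<^sup>2)"
    unfolding P_def gmom_def by (rule sum_mass_norm_perp_sq[OF n1 mnn])
  moreover have "(\<Sum>i<N. (Q i)\<^sup>2) = 2 * kin N m v - (\<Sum>i<N. m i * (n \<bullet> v i)\<^sup>2)"
    unfolding Q_def kin_def using sum_mass_norm_perp_sq[OF n1 mnn, of v] by simp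
  ultimately show ?thesis
    by simp
qed

text \<open>The components along \<open>n = sgn L\<close> enter the bound of \<open>inner_ang_mom_sq_le\<close> with a
  negative sign, so they must vanish once \<open>g \<cdot> 2T \<le> |L|\<^sup>2\<close>.\<close>
lemma planar_if_gmom_kin_le_ang_mom:
  assumes mpos: "\<forall>i<N. m i > 0"
    and L: "ang_mom N m r v \<noteq> 0" and g: "gmom N m r > 0"
    and le: "gmom N m r * (2 * kin N m v) \<le> (norm (ang_mom N m r v))\<^sup>2"
  shows "\<forall>i<N. sgn (ang_mom N m r v) \<bullet> r i = 0 \<and> sgn (ang_mom N m r v) \<bullet> v i = 0"
proof -
  define n where "n = sgn (ang_mom N m r v)"
  define Z where "Z = (\<Sum>i<N. m i * (n \<bullet> r i)\<^sup>2)"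
  define W where "W = (\<Sum>i<N. m i * (n \<bullet> v i)\<^sup>2)"
  have mnn: "\<forall>i<N. m i \<ge> 0"
    using mpos by (simp add: less_imp_le)
  have n1: "norm n = 1"
    using L by (simp add: n_def norm_sgn)
  have "n \<bullet> ang_mom N m r v = norm (ang_mom N m r v)"
    using L by (simp add: n_def sgn_div_norm power2_norm_eq_inner[symmetric] power2_eq_square)
  moreover have "(n \<bullet> ang_mom N m r v)\<^sup>2 \<le> (gmom N m r - Z) * (2 * kin N m v - W)"
    unfolding Z_def W_def by (rule inner_ang_mom_sq_le[OF n1 mnn])
  ultimately have ineq: "(norm (ang_mom N m r v))\<^sup>2 \<le> (gmom N m r - Z) * (2 * kin N m v - W)"
    by simp
  have "Z \<ge> 0" "W \<ge> 0"
    using mnn by (auto simp: Z_def W_def intro!: sum_nonneg)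
  have "Z \<le> gmom N m r"
    unfolding Z_def gmom_def using mnn inner_sq_le_norm_sq[OF n1]
    by (intro sum_mono mult_left_mono) auto
  have T: "kin N m v > 0"
    using kin_pos_of_ang_mom_ne_0[OF mpos L] .
  have "Z * (2 * kin N m v) + W * (gmom N m r - Z) \<le> 0"
    using ineq le by (simp add: algebra_simps)
  moreover have "Z * (2 * kin N m v) \<ge> 0" "W * (gmom N m r - Z) \<ge> 0"
    using \<open>Z \<ge> 0\<close> \<open>W \<ge> 0\<close> \<open>Z \<le> gmom N m r\<close> T by simp_all
  ultimately have "Z * (2 * kin N m v) = 0" "W * (gmom N m r - Z) = 0"
    by linarith+
  then have "Z = 0" "W = 0"
    using T g by simp_all
  then show ?thesis
    using sum_weighted_sq_eq_0_iff[OF mpos] by (simp add: Z_def W_def n_def)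
qed

section \<open>Configurations of minimal size\<close>

lemma kin_eq_half_gmom: "kin N m x = gmom N m x / 2"
  by (simp add: kin_def gmom_def)

lemma gmom_scaleR: "gmom N m (\<lambda>i. c *\<^sub>R r i) = c\<^sup>2 * gmom N m r"
  by (simp add: gmom_def sum_distrib_left power_mult_distrib mult_ac)

lemma in_R3_scaleR: "c \<noteq> 0 \<Longrightarrow> in_R3 N r \<Longrightarrow> in_R3 N (\<lambda>i. c *\<^sub>R r i)"
  unfolding in_R3_def by simp

lemma Wfun_le_gmom:
  assumes "\<forall>i<N. m i \<ge> 0" and "in_R3 N r"
  shows "Wfun N m (ang_mom N m r v) (kin N m v) \<le> gmom N m r"
  unfolding Wfun_def
proof (rule cInf_lower)
  show "gmom N m r \<in> {gmom N m r' |r' v'. in_R3 N r' \<and> ang_mom N m r' v' = ang_mom N m r v \<and>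
      kin N m v' = kin N m v}"
    using assms(2) by blast
  show "bdd_below {gmom N m r' |r' v'. in_R3 N r' \<and> ang_mom N m r' v' = ang_mom N m r v \<and>
      kin N m v' = kin N m v}"
    by (rule bdd_belowI[of _ 0]) (auto simp: gmom_nonneg[OF assms(1)])
qed

text \<open>Shrinking a configuration and letting it expand radially costs no angular momentum.\<close>
lemma Wfun_0_less:
  assumes mnn: "\<forall>i<N. m i \<ge> 0" and R: "in_R3 N r" and T: "T \<ge> 0" and g: "gmom N m r > 0"
  shows "Wfun N m 0 T < gmom N m r"
proof -
  define \<mu> where "\<mu> = sqrt (8 * T / gmom N m r)"
  define r' where "r' i = (1/2::real) *\<^sub>R r i" for i
  define v' where "v' i = \<mu> *\<^sub>R r' i" for i
  have g': "gmom N m r' = gmom N m r / 4"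
    unfolding r'_def gmom_scaleR by (simp add: power2_eq_square)
  have R': "in_R3 N r'"
    unfolding r'_def by (rule in_R3_scaleR[OF _ R]) simp
  have "ang_mom N m r' v' = 0"
    unfolding ang_mom_def v'_def by (simp add: cross_mult_right)
  moreover have "kin N m v' = T"
    using T g unfolding v'_def kin_eq_half_gmom gmom_scaleR g' \<mu>_def by simp
  ultimately have "Wfun N m 0 T \<le> gmom N m r'"
    using Wfun_le_gmom[OF mnn R', of v'] by simp
  then show ?thesis
    using g g' by simp
qed

lemma cross_cross_orthogonal:
  assumes "w \<bullet> x = 0"
  shows "cross3 x (cross3 w x) = (norm x)\<^sup>2 *\<^sub>R w"
    and "(norm (cross3 w x))\<^sup>2 = (norm w)\<^sup>2 * (norm x)\<^sup>2"
proof -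
  have "cross3 x (cross3 w x) = (x \<bullet> x) *\<^sub>R w - (x \<bullet> w) *\<^sub>R x"
    by (simp add: cross3_simps forall_3)
  then show "cross3 x (cross3 w x) = (norm x)\<^sup>2 *\<^sub>R w"
    using assms by (simp add: inner_commute power2_norm_eq_inner)
  show "(norm (cross3 w x))\<^sup>2 = (norm w)\<^sup>2 * (norm x)\<^sup>2"
    using norm_cross_dot[of w x] assms by (simp add: power_mult_distrib)
qed

lemma ang_mom_kin_rigid_rotation:
  assumes "\<forall>i<N. w \<bullet> r i = 0"
  shows "ang_mom N m r (\<lambda>i. cross3 w (r i)) = gmom N m r *\<^sub>R w"
    and "kin N m (\<lambda>i. cross3 w (r i)) = (norm w)\<^sup>2 * gmom N m r / 2"
  using assms
  by (simp_all add: ang_mom_def kin_def gmom_def cross_cross_orthogonal scaleR_sum_left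
      sum_distrib_left mult_ac)

lemma Wfun_le_norm_sq_div:
  assumes mpos: "\<forall>i<N. m i > 0" and N: "N \<ge> 1" and L: "L \<noteq> 0" and T: "T > 0"
  shows "Wfun N m L T \<le> (norm L)\<^sup>2 / (2 * T)"
proof -
  define G where "G = (norm L)\<^sup>2 / (2 * T)"
  obtain u where u: "u \<noteq> 0" "orthogonal L u"
    using orthogonal_to_vector_exists[of L] by auto
  define r0 where "r0 i = (real i + 1) *\<^sub>R u" for i
  have g0: "gmom N m r0 > 0"
    using gmom_pos[OF mpos, of 0 r0] N u by (simp add: r0_def)
  define c where "c = sqrt (G / gmom N m r0)"
  define r where "r i = c *\<^sub>R r0 i" for i
  have G: "G > 0"
    using L T by (simp add: G_def)
  have gr: "gmom N m r = G"
    using g0 G unfolding r_def gmom_scaleR c_def by simp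
  have "in_R3 N r0"
    using u by (simp add: in_R3_def r0_def)
  then have R: "in_R3 N r"
    unfolding r_def using G g0 by (intro in_R3_scaleR) (simp add: c_def)
  have perp: "\<forall>i<N. (L /\<^sub>R G) \<bullet> r i = 0"
    using u by (simp add: r_def r0_def orthogonal_def)
  define v where "v i = cross3 (L /\<^sub>R G) (r i)" for i
  have "ang_mom N m r v = L"
    using G unfolding v_def[abs_def] by (simp add: ang_mom_kin_rigid_rotation(1)[OF perp] gr)
  moreover have "kin N m v = T"
  proof -
    have "kin N m v = (norm (L /\<^sub>R G))\<^sup>2 * G / 2"
      unfolding v_def[abs_def] by (simp only: ang_mom_kin_rigid_rotation(2)[OF perp] gr)
    also have "\<dots> = (norm L)\<^sup>2 / (2 * G)"
      using G by (simp add: power_divide power2_eq_square field_simps)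
    also have "\<dots> = T"
      using T L by (simp add: G_def)
    finally show ?thesis .
  qed
  ultimately show ?thesis
    using Wfun_le_gmom[OF _ R, of m v] mpos gr by (simp add: G_def less_imp_le)
qed

lemma planar_if_Wfun_attained:
  assumes mpos: "\<forall>i<N. m i > 0" and N: "N \<ge> 2" and R: "in_R3 N r"
    and attained: "gmom N m r = Wfun N m (ang_mom N m r v) (kin N m v)"
  shows "ang_mom N m r v \<noteq> 0"
    and "\<forall>i<N. sgn (ang_mom N m r v) \<bullet> r i = 0 \<and> sgn (ang_mom N m r v) \<bullet> v i = 0"
proof -
  have mnn: "\<forall>i<N. m i \<ge> 0"
    using mpos by (simp add: less_imp_le)
  have g: "gmom N m r > 0"
    using gmom_pos_of_in_R3[OF mpos N R] .
  show L: "ang_mom N m r v \<noteq> 0"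
  proof
    assume "ang_mom N m r v = 0"
    then show False
      using Wfun_0_less[OF mnn R kin_nonneg[OF mnn, of v] g] attained by simp
  qed
  have T: "kin N m v > 0"
    using kin_pos_of_ang_mom_ne_0[OF mpos L] .
  have "gmom N m r \<le> (norm (ang_mom N m r v))\<^sup>2 / (2 * kin N m v)"
    using Wfun_le_norm_sq_div[OF mpos _ L T] N attained by simp
  then have "gmom N m r * (2 * kin N m v) \<le> (norm (ang_mom N m r v))\<^sup>2"
    using T by (simp add: field_simps)
  then show "\<forall>i<N. sgn (ang_mom N m r v) \<bullet> r i = 0 \<and> sgn (ang_mom N m r v) \<bullet> v i = 0"
    by (rule planar_if_gmom_kin_le_ang_mom[OF mpos L g])
qed

section \<open>Invariance of the plane of motion\<close>

lemma abs_inner_accel_le: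
  assumes C: "C > 0" and sep: "\<forall>i<N. \<forall>j<N. i \<noteq> j \<longrightarrow> C \<le> norm (r j - r i)"
    and mnn: "\<forall>i<N. m i \<ge> 0" and \<gamma>: "\<gamma> \<ge> 0" and i: "i < N"
  shows "\<bar>n \<bullet> accel N m \<gamma> r i\<bar> \<le> \<gamma> * (\<Sum>k<N. m k) / C ^ 3 * (\<Sum>j<N. \<bar>n \<bullet> r j\<bar> + \<bar>n \<bullet> r i\<bar>)"
proof -
  define B where "B = \<gamma> * (\<Sum>k<N. m k) / C ^ 3"
  have B: "B \<ge> 0"
    unfolding B_def using C \<gamma> mnn by (intro divide_nonneg_pos mult_nonneg_nonneg sum_nonneg) auto
  have "\<bar>n \<bullet> accel N m \<gamma> r i\<bar> \<le>
      (\<Sum>j\<in>{..<N}-{i}. \<bar>\<gamma> * m j / (norm (r j - r i)) ^ 3 * (n \<bullet> r j - n \<bullet> r i)\<bar>)"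
    unfolding accel_def inner_sum_right inner_scaleR_right inner_diff_right by (rule sum_abs)
  also have "\<dots> \<le> (\<Sum>j\<in>{..<N}-{i}. B * (\<bar>n \<bullet> r j\<bar> + \<bar>n \<bullet> r i\<bar>))"
  proof (rule sum_mono)
    fix j assume j: "j \<in> {..<N}-{i}"
    then have d: "C \<le> norm (r j - r i)"
      using sep i by auto
    have "\<gamma> * m j / (norm (r j - r i)) ^ 3 \<le> \<gamma> * m j / C ^ 3"
      using d C \<gamma> mnn j by (intro divide_left_mono power_mono mult_pos_pos) auto
    also have "\<dots> \<le> B"
      unfolding B_def using j mnn C \<gamma>
      by (intro divide_right_mono mult_left_mono member_le_sum) auto
    finally have "\<bar>\<gamma> * m j / (norm (r j - r i)) ^ 3\<bar> \<le> B"
      using \<gamma> mnn j by simp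
    moreover have "\<bar>n \<bullet> r j - n \<bullet> r i\<bar> \<le> \<bar>n \<bullet> r j\<bar> + \<bar>n \<bullet> r i\<bar>"
      by (rule abs_triangle_ineq4)
    ultimately show "\<bar>\<gamma> * m j / (norm (r j - r i)) ^ 3 * (n \<bullet> r j - n \<bullet> r i)\<bar> \<le>
        B * (\<bar>n \<bullet> r j\<bar> + \<bar>n \<bullet> r i\<bar>)"
      unfolding abs_mult using B by (intro mult_mono) auto
  qed
  also have "\<dots> \<le> (\<Sum>j<N. B * (\<bar>n \<bullet> r j\<bar> + \<bar>n \<bullet> r i\<bar>))"
    using B by (intro sum_mono2) auto
  finally show ?thesis
    by (simp add: B_def sum_distrib_left)
qed

lemma abs_energy_deriv_le:
  fixes z w a :: "nat \<Rightarrow> real"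
  assumes B: "B \<ge> 0" and a: "\<And>i. i < N \<Longrightarrow> \<bar>a i\<bar> \<le> B * (\<Sum>j<N. \<bar>z j\<bar> + \<bar>z i\<bar>)"
  shows "\<bar>\<Sum>i<N. 2 * z i * w i + 2 * w i * a i\<bar> \<le> (1 + 2 * real N * B) * (\<Sum>i<N. (z i)\<^sup>2 + (w i)\<^sup>2)"
proof -
  have zw: "\<bar>2 * z i * w i\<bar> \<le> (z i)\<^sup>2 + (w i)\<^sup>2" for i
    using sum_squares_bound[of "\<bar>z i\<bar>" "\<bar>w i\<bar>"] by (simp add: abs_mult)
  have wa: "\<bar>2 * w i * a i\<bar> \<le> B * (\<Sum>j<N. 2 * (w i)\<^sup>2 + (z i)\<^sup>2 + (z j)\<^sup>2)" if "i < N" for i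
  proof -
    have "\<bar>2 * w i * a i\<bar> = 2 * \<bar>w i\<bar> * \<bar>a i\<bar>"
      by (simp add: abs_mult)
    also have "\<dots> \<le> 2 * \<bar>w i\<bar> * (B * (\<Sum>j<N. \<bar>z j\<bar> + \<bar>z i\<bar>))"
      using a[OF that] by (intro mult_left_mono) auto
    also have "\<dots> = B * (\<Sum>j<N. 2 * \<bar>w i\<bar> * \<bar>z j\<bar> + 2 * \<bar>w i\<bar> * \<bar>z i\<bar>)"
      by (simp add: sum_distrib_left algebra_simps)
    also have "\<dots> \<le> B * (\<Sum>j<N. 2 * (w i)\<^sup>2 + (z i)\<^sup>2 + (z j)\<^sup>2)"
    proof (intro mult_left_mono[OF _ B] sum_mono)
      fix j
      show "2 * \<bar>w i\<bar> * \<bar>z j\<bar> + 2 * \<bar>w i\<bar> * \<bar>z i\<bar> \<le> 2 * (w i)\<^sup>2 + (z i)\<^sup>2 + (z j)\<^sup>2"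
        using sum_squares_bound[of "\<bar>w i\<bar>" "\<bar>z j\<bar>"] sum_squares_bound[of "\<bar>w i\<bar>" "\<bar>z i\<bar>"] by simp
    qed
    finally show ?thesis .
  qed
  have "\<bar>\<Sum>i<N. 2 * z i * w i + 2 * w i * a i\<bar> \<le>
      (\<Sum>i<N. (z i)\<^sup>2 + (w i)\<^sup>2 + B * (\<Sum>j<N. 2 * (w i)\<^sup>2 + (z i)\<^sup>2 + (z j)\<^sup>2))"
  proof (rule order_trans[OF sum_abs sum_mono])
    fix i assume "i \<in> {..<N}"
    then show "\<bar>2 * z i * w i + 2 * w i * a i\<bar> \<le>
        (z i)\<^sup>2 + (w i)\<^sup>2 + B * (\<Sum>j<N. 2 * (w i)\<^sup>2 + (z i)\<^sup>2 + (z j)\<^sup>2)"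
      using zw[of i] wa[of i] abs_triangle_ineq[of "2 * z i * w i" "2 * w i * a i"] by simp
  qed
  also have "\<dots> = (1 + 2 * real N * B) * (\<Sum>i<N. (z i)\<^sup>2 + (w i)\<^sup>2)"
    by (simp add: sum.distrib sum_distrib_left algebra_simps)
  finally show ?thesis .
qed

lemma decreasing_of_deriv_nonpos_Ici:
  fixes f :: "real \<Rightarrow> real"
  assumes ab: "0 \<le> a" "a \<le> b"
    and f': "\<And>s. s \<ge> 0 \<Longrightarrow> (f has_real_derivative f' s) (at s within {0..})"
    and nonpos: "\<And>s. a < s \<Longrightarrow> s < b \<Longrightarrow> f' s \<le> 0"
  shows "f b \<le> f a"
proof (rule DERIV_nonpos_imp_decreasing_open[OF ab(2)])
  fix s assume s: "a < s" "s < b"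
  then have "at s within {0..} = at s"
    using ab by (intro at_within_interior) simp
  then show "\<exists>y. (f has_real_derivative y) (at s) \<and> y \<le> 0"
    using f'[of s] nonpos[OF s] s ab by auto
next
  have "continuous_on {0..} f"
    unfolding continuous_on_eq_continuous_within using f' DERIV_continuous by fastforce
  then show "continuous_on {a..b} f"
    by (rule continuous_on_subset) (use ab in auto)
qed

lemma gronwall_eq_0:
  fixes E E' :: "real \<Rightarrow> real"
  assumes E': "\<And>s. s \<ge> 0 \<Longrightarrow> (E has_real_derivative E' s) (at s within {0..})"
    and bound: "\<And>s. s \<ge> 0 \<Longrightarrow> \<bar>E' s\<bar> \<le> K * E s"
    and nonneg: "\<And>s. s \<ge> 0 \<Longrightarrow> E s \<ge> 0"
    and t0: "t0 \<ge> 0" "E t0 = 0" and t: "t \<ge> 0"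
  shows "E t = 0"
proof (cases "t0 \<le> t")
  case True
  have "exp (- K * t) * E t \<le> exp (- K * t0) * E t0"
  proof (rule decreasing_of_deriv_nonpos_Ici[OF t0(1) True])
    show "((\<lambda>s. exp (- K * s) * E s) has_real_derivative exp (- K * s) * (E' s - K * E s))
        (at s within {0..})" if "s \<ge> 0" for s
      using E'[OF that] by (auto intro!: derivative_eq_intros simp: algebra_simps)
    show "exp (- K * s) * (E' s - K * E s) \<le> 0" if "t0 < s" "s < t" for s
      using bound[of s] that t0 by (simp add: mult_nonneg_nonpos)
  qed
  then have "E t \<le> 0"
    using t0 by (simp add: mult_le_0_iff)
  then show ?thesis
    using nonneg[OF t] by simp
next
  case False
  have "- (exp (K * t0) * E t0) \<le> - (exp (K * t) * E t)"
  proof (rule decreasing_of_deriv_nonpos_Ici[OF t])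
    show "t \<le> t0"
      using False by simp
    show "((\<lambda>s. - (exp (K * s) * E s)) has_real_derivative - (exp (K * s) * (E' s + K * E s)))
        (at s within {0..})" if "s \<ge> 0" for s
      using E'[OF that] by (auto intro!: derivative_eq_intros simp: algebra_simps)
    show "- (exp (K * s) * (E' s + K * E s)) \<le> 0" if "t < s" "s < t0" for s
      using bound[of s] that t by simp
  qed
  then have "E t \<le> 0"
    using t0 by (simp add: mult_le_0_iff)
  then show ?thesis
    using nonneg[OF t] by simp
qed

text \<open>The energy \<open>E = \<Sum> (n \<bullet> r\<^sub>i)\<^sup>2 + (n \<bullet> v\<^sub>i)\<^sup>2\<close> of the motion normal to the plane
  satisfies \<open>|E'| \<le> K E\<close>, because the separation bound makes the normal part of the force
  Lipschitz in the normal coordinates.\<close>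
lemma plane_invariant:
  assumes sol: "is_solution N m \<gamma> r v" and mnn: "\<forall>i<N. m i \<ge> 0" and \<gamma>: "\<gamma> \<ge> 0"
    and C: "C > 0" and sep: "\<forall>t\<ge>0. \<forall>i<N. \<forall>j<N. i \<noteq> j \<longrightarrow> C \<le> norm (r t j - r t i)"
    and t0: "t0 \<ge> 0" and r0: "\<forall>i<N. n \<bullet> r t0 i = 0" and v0: "\<forall>i<N. n \<bullet> v t0 i = 0"
  shows "\<forall>t\<ge>0. \<forall>i<N. n \<bullet> r t i = 0"
proof (intro allI impI)
  fix t :: real and i :: nat assume t: "t \<ge> 0" and i: "i < N"
  define B where "B = \<gamma> * (\<Sum>k<N. m k) / C ^ 3"
  define z where "z s i = n \<bullet> r s i" for s i
  define w where "w s i = n \<bullet> v s i" for s i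
  define a where "a s i = n \<bullet> accel N m \<gamma> (r s) i" for s i
  define E where "E s = (\<Sum>i<N. (z s i)\<^sup>2 + (w s i)\<^sup>2)" for s
  have "((\<lambda>s. z s i) has_real_derivative w s i) (at s within {0..})"
    and "((\<lambda>s. w s i) has_real_derivative a s i) (at s within {0..})" if "s \<ge> 0" "i < N" for s i
    using sol that unfolding is_solution_def z_def w_def a_def has_real_derivative_iff_has_vector_derivative
    by (auto intro: bounded_linear.has_vector_derivative[OF bounded_linear_inner_right])
  then have E': "(E has_real_derivative (\<Sum>i<N. 2 * z s i * w s i + 2 * w s i * a s i)) (at s within {0..})"
    if "s \<ge> 0" for s
    unfolding E_def[abs_def] using that by (auto intro!: derivative_eq_intros DERIV_sum)
  have "\<bar>\<Sum>i<N. 2 * z s i * w s i + 2 * w s i * a s i\<bar> \<le> (1 + 2 * real N * B) * E s" if "s \<ge> 0" for s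
    unfolding E_def
  proof (rule abs_energy_deriv_le)
    show "B \<ge> 0"
      unfolding B_def using C \<gamma> mnn by (intro divide_nonneg_pos mult_nonneg_nonneg sum_nonneg) auto
    show "\<bar>a s i\<bar> \<le> B * (\<Sum>j<N. \<bar>z s j\<bar> + \<bar>z s i\<bar>)" if "i < N" for i
      unfolding a_def z_def B_def using abs_inner_accel_le[OF C _ mnn \<gamma> that] sep \<open>s \<ge> 0\<close> by simp
  qed
  moreover have "E t0 = 0"
    using r0 v0 by (simp add: E_def z_def w_def)
  ultimately have "E t = 0"
    using E' t0 t by (intro gronwall_eq_0[of E _ "1 + 2 * real N * B" t0 t]) (auto simp: E_def intro: sum_nonneg)
  then show "n \<bullet> r t i = 0"
    using i by (simp add: E_def z_def sum_nonneg_eq_0_iff add_nonneg_eq_0_iff)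
qed

theorem theorem11p1:
  fixes N :: nat and m :: "nat \<Rightarrow> real" and \<gamma> :: real
    and r v :: "real \<Rightarrow> nat \<Rightarrow> real^3" and t0 :: real
  assumes "N \<ge> 2" and "\<forall>i<N. m i > 0" and "\<gamma> > 0"
    and "is_solution N m \<gamma> r v" and "stationary N r"
    and "t0 \<ge> 0"
    and "gmom N m (r t0) = Wfun N m (ang_mom N m (r 0) (v 0)) (kin N m (v t0))"
  shows "flat N r"
proof -
  define L where "L = ang_mom N m (r 0) (v 0)"
  have L_t0: "ang_mom N m (r t0) (v t0) = L"
    unfolding L_def using ang_mom_conserved[OF assms(4,6)] .
  have R: "in_R3 N (r t0)"
    using assms(4,6) by (simp add: is_solution_def)
  have "gmom N m (r t0) = Wfun N m (ang_mom N m (r t0) (v t0)) (kin N m (v t0))"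
    using assms(7) by (simp add: L_t0 L_def)
  from planar_if_Wfun_attained[OF assms(2,1) R this]
  have "L \<noteq> 0" and planar: "\<forall>i<N. sgn L \<bullet> r t0 i = 0 \<and> sgn L \<bullet> v t0 i = 0"
    unfolding L_t0 by simp_all
  obtain C where "C > 0" and sep: "\<forall>t\<ge>0. \<forall>i<N. \<forall>j<N. i \<noteq> j \<longrightarrow> C \<le> norm (r t j - r t i)"
    using assms(5) unfolding stationary_def by blast
  have "\<forall>i<N. m i \<ge> 0"
    using assms(2) by (simp add: less_imp_le)
  with planar assms(3) have "\<forall>t\<ge>0. \<forall>i<N. sgn L \<bullet> r t i = 0"
    by (intro plane_invariant[OF assms(4) _ _ \<open>C > 0\<close> sep assms(6)]) auto
  moreover have "sgn L \<noteq> 0"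
    using \<open>L \<noteq> 0\<close> by (simp add: sgn_zero_iff)
  ultimately show ?thesis
    unfolding flat_def by blast
qed

end
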